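(* There is an absolute constant $C$ such that the following holds. Let $\sigma\in(0,1]$ and let $\mathcal{I}$ be a finite set of closed intervals on the real line that all contain a common point $p$. If $\mathcal{I}$ is $\sigma$-exposed, then $|\mathcal{I}|\le C/\sigma^2$.
   Context: For sets $X, Y\subseteq\mathbb{R}^d$ and $\sigma>0$, $X$ $\sigma$-shadows $Y$ if $\max_{q\in Y} \mathrm{dist}(q, X) \le \sigma\cdot \mathrm{diam}(Y)$, where $\mathrm{dist}(q,X)=\min_{p\in X}\|q-p\|$. A set of objects is $\sigma$-exposed if no object in the set $\sigma$-shadows another (distinct) object of the set. For intervals, $I=[\ell,r]$ $\sigma$-shadows $I'$ iff $I'\subseteq[\ell-\sigma|I'|,\, r+\sigma|I'|]$, where $|I'|$ is the length of $I'$. *)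

theory Defs
  imports "HOL-Analysis.Analysis"
begin

text \<open>X sigma-shadows Y: every point of Y is within sigma * diam Y of X.
  For the compact sets considered here, infdist is attained, so it is the min in the paper.\<close>
definition shadows :: "real \<Rightarrow> 'a::metric_space set \<Rightarrow> 'a set \<Rightarrow> bool" where
  "shadows \<sigma> X Y \<longleftrightarrow> (\<forall>q\<in>Y. infdist q X \<le> \<sigma> * diameter Y)"

definition exposed :: "real \<Rightarrow> 'a::metric_space set set \<Rightarrow> bool" where
  "exposed \<sigma> S \<longleftrightarrow> (\<forall>X\<in>S. \<forall>Y\<in>S. X \<noteq> Y \<longrightarrow> \<not> shadows \<sigma> X Y)"

definition closed_interval :: "real set \<Rightarrow> bool" where
  "closed_interval I \<longleftrightarrow> (\<exists>l r. l \<le> r \<and> I = {l..r})"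

end

theory Submission
  imports Defs
begin

text \<open>Write each interval through \<open>p\<close> as \<open>[p - a, p + b]\<close>. As all intervals contain \<open>p\<close>,
  \<open>X\<close> can fail to \<open>\<sigma>\<close>-shadow \<open>Y\<close> only if some arm of \<open>Y\<close> exceeds the corresponding arm of \<open>X\<close>
  by more than \<open>\<sigma> |Y|\<close>. Split the family according to which arm is longer; by symmetry let
  \<open>b \<le> a\<close>, and let \<open>J\<close> have the shortest left arm \<open>a\<^sub>0\<close>. No other interval shadows \<open>J\<close>, and the
  left arm of \<open>J\<close> cannot be the one sticking out, so all right arms are shorter than \<open>b\<^sub>J \<le> a\<^sub>0\<close>.
  Of two intervals at most one sticks out of the other on the left, so their right arms differ
  by more than \<open>\<sigma> a\<^sub>0\<close>. This leaves at most \<open>1/\<sigma> + 1\<close> intervals in each half.\<close>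

lemma card_separated_le:
  fixes B :: "real set"
  assumes "finite B" "B \<subseteq> {m..M}" "m \<le> M" "0 < \<delta>"
    and separated: "\<And>x y. x \<in> B \<Longrightarrow> y \<in> B \<Longrightarrow> x \<noteq> y \<Longrightarrow> \<delta> < \<bar>x - y\<bar>"
  shows "real (card B) \<le> (M - m) / \<delta> + 1"
proof -
  define cell where "cell x = nat \<lfloor>(x - m) / \<delta>\<rfloor>" for x
  have "inj_on cell B"
  proof (rule inj_onI, rule ccontr)
    fix x y assume xy: "x \<in> B" "y \<in> B" "cell x = cell y" "x \<noteq> y"
    moreover have "0 \<le> (x - m) / \<delta>" "0 \<le> (y - m) / \<delta>" using xy(1,2) assms(2,4) by auto
    ultimately have "\<lfloor>(x - m) / \<delta>\<rfloor> = \<lfloor>(y - m) / \<delta>\<rfloor>"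
      by (simp add: cell_def eq_nat_nat_iff)
    then have "\<bar>(x - m) / \<delta> - (y - m) / \<delta>\<bar> < 1" by linarith
    then have "\<bar>x - y\<bar> < \<delta>" using \<open>0 < \<delta>\<close> by (simp add: diff_divide_distrib[symmetric])
    then show False using separated[OF xy(1,2,4)] by simp
  qed
  moreover have "cell ` B \<subseteq> {0..nat \<lfloor>(M - m) / \<delta>\<rfloor>}"
    using assms(2,4) by (auto simp: cell_def subset_iff intro!: nat_mono floor_mono divide_right_mono)
  ultimately have "card B \<le> nat \<lfloor>(M - m) / \<delta>\<rfloor> + 1"
    using card_mono[of "{0..nat \<lfloor>(M - m) / \<delta>\<rfloor>}" "cell ` B"] by (simp add: card_image)
  moreover have "real (nat \<lfloor>(M - m) / \<delta>\<rfloor>) \<le> (M - m) / \<delta>"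
    using assms(3,4) by (simp add: of_nat_nat)
  ultimately show ?thesis by linarith
qed

lemma shadows_intervalI:
  fixes l r l' r' :: real
  assumes "0 \<le> \<sigma>" "l' \<le> r'"
    and "l - \<sigma> * (r' - l') \<le> l'" "r' \<le> r + \<sigma> * (r' - l')"
  shows "shadows \<sigma> {l..r} {l'..r'}"
  unfolding shadows_def
proof
  fix q assume q: "q \<in> {l'..r'}"
  have "infdist q {l..r} \<le> \<sigma> * (r' - l')"
  proof (cases "l \<le> q \<and> q \<le> r")
    case True
    then have "infdist q {l..r} = 0" by (intro infdist_zero) auto
    then show ?thesis using q assms(1) by simp
  next
    case False
    show ?thesis
    proof (cases "l \<le> r")
      case True
      then have "infdist q {l..r} \<le> dist q l" "infdist q {l..r} \<le> dist q r"
        by (auto intro: infdist_le)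
      then show ?thesis using False q assms(3,4) by (auto simp: dist_real_def)
    qed (use q assms in \<open>simp add: infdist_def\<close>)
  qed
  then show "infdist q {l..r} \<le> \<sigma> * diameter {l'..r'}" using assms(2) by simp
qed

lemma card_exposed_arms_le:
  fixes A :: "'x set" and a b :: "'x \<Rightarrow> real"
  assumes "finite A" "0 < \<sigma>"
    and arms: "\<And>x. x \<in> A \<Longrightarrow> 0 \<le> b x \<and> b x \<le> a x"
    and escapes: "\<And>x y. x \<in> A \<Longrightarrow> y \<in> A \<Longrightarrow> x \<noteq> y \<Longrightarrow>
      a x + \<sigma> * (a y + b y) < a y \<or> b x + \<sigma> * (a y + b y) < b y"
  shows "real (card A) \<le> 1 / \<sigma> + 1"
proof (cases "A = {}")
  case True
  then show ?thesis using \<open>0 < \<sigma>\<close> by simp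
next
  case False
  define J where "J = arg_min_on a A"
  have J: "J \<in> A" "\<And>y. y \<in> A \<Longrightarrow> a J \<le> a y"
    using arg_min_if_finite[OF \<open>finite A\<close> False, of a] by (auto simp: J_def not_less)
  have margin: "\<sigma> * a J \<le> \<sigma> * (a y + b y)" if "y \<in> A" for y
    using \<open>0 < \<sigma>\<close> arms[OF that] J(2)[OF that] by simp
  have "0 \<le> \<sigma> * a J" using \<open>0 < \<sigma>\<close> arms[OF J(1)] by simp
  have right_arm_le: "b y \<le> a J" if "y \<in> A" for y
  proof (cases "y = J")
    case False
    then show ?thesis
      using escapes[OF that J(1)] J(2)[OF that] margin[OF J(1)] arms[OF J(1)] \<open>0 \<le> \<sigma> * a J\<close>
      by linarith
  qed (use arms J(1) in auto)
  have separated: "\<sigma> * a J < \<bar>b y - b z\<bar>" if "y \<in> A" "z \<in> A" "y \<noteq> z" for y z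
    using escapes[OF that] escapes[OF that(2,1) that(3)[symmetric]] margin[OF that(1)] margin[OF that(2)]
    by (smt (verit))
  have "inj_on b A"
    using separated \<open>0 \<le> \<sigma> * a J\<close> by (intro inj_onI) force
  have image: "b ` A \<subseteq> {0..a J}" using arms right_arm_le by auto
  have "real (card (b ` A)) \<le> 1 / \<sigma> + 1"
  proof (cases "a J = 0")
    case True
    then have "card (b ` A) \<le> card {0::real}" using image by (intro card_mono) auto
    then have "real (card (b ` A)) \<le> 1" by simp
    moreover have "0 < 1 / \<sigma>" using \<open>0 < \<sigma>\<close> by simp
    ultimately show ?thesis by linarith
  next
    case False
    then have "real (card (b ` A)) \<le> a J / (\<sigma> * a J) + 1"
      using card_separated_le[of "b ` A" 0 "a J" "\<sigma> * a J"] image separated \<open>finite A\<close>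
        \<open>0 < \<sigma>\<close> arms[OF J(1)]
      by auto
    then show ?thesis using False by simp
  qed
  then show ?thesis by (simp only: card_image[OF \<open>inj_on b A\<close>])
qed

lemma card_exposed_intervals_through_point_le:
  fixes \<I> :: "real set set"
  assumes "0 < \<sigma>" "finite \<I>" and through: "\<forall>I\<in>\<I>. closed_interval I \<and> p \<in> I"
    and "exposed \<sigma> \<I>"
  shows "real (card \<I>) \<le> 2 / \<sigma> + 2"
proof -
  define a where "a I = p - Inf I" for I :: "real set"
  define b where "b I = Sup I - p" for I :: "real set"
  have arms: "I = {p - a I..p + b I}" "0 \<le> a I" "0 \<le> b I" if "I \<in> \<I>" for I
  proof -
    have "closed_interval I" "p \<in> I" using through that by auto
    then obtain l r where "l \<le> r" "I = {l..r}" "p \<in> I"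
      unfolding closed_interval_def by auto
    then show "I = {p - a I..p + b I}" "0 \<le> a I" "0 \<le> b I" by (simp_all add: a_def b_def)
  qed
  have escapes: "a X + \<sigma> * (a Y + b Y) < a Y \<or> b X + \<sigma> * (a Y + b Y) < b Y"
    if "X \<in> \<I>" "Y \<in> \<I>" "X \<noteq> Y" for X Y
  proof (rule ccontr)
    assume "\<not> ?thesis"
    then have "shadows \<sigma> {p - a X..p + b X} {p - a Y..p + b Y}"
      using \<open>0 < \<sigma>\<close> arms(2,3)[OF that(2)] by (intro shadows_intervalI) (auto simp: add.commute)
    then have "shadows \<sigma> X Y" using arms(1)[OF that(1)] arms(1)[OF that(2)] by argo
    then show False using \<open>exposed \<sigma> \<I>\<close> that unfolding exposed_def by blast
  qed
  define \<L> where "\<L> = {I \<in> \<I>. b I \<le> a I}"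
  define \<R> where "\<R> = {I \<in> \<I>. a I \<le> b I}"
  have "\<I> = \<L> \<union> \<R>" by (auto simp: \<L>_def \<R>_def)
  then have "card \<I> \<le> card \<L> + card \<R>" using card_Un_le[of \<L> \<R>] by simp
  moreover have "real (card \<L>) \<le> 1 / \<sigma> + 1"
    using \<open>finite \<I>\<close> \<open>0 < \<sigma>\<close> arms(3) escapes
    by (intro card_exposed_arms_le[where a = a and b = b]) (auto simp: \<L>_def)
  moreover have "real (card \<R>) \<le> 1 / \<sigma> + 1"
    using \<open>finite \<I>\<close> \<open>0 < \<sigma>\<close> arms(2) escapes
    by (intro card_exposed_arms_le[where a = b and b = a]) (auto simp: \<R>_def add.commute)
  ultimately show ?thesis by linarith
qed

theorem mainTheorem4:
  "\<exists>C::real. \<forall>(\<sigma>::real) (\<I>::real set set) (p::real).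
     0 < \<sigma> \<and> \<sigma> \<le> 1 \<and> finite \<I> \<and> (\<forall>I\<in>\<I>. closed_interval I \<and> p \<in> I)
     \<and> exposed \<sigma> \<I> \<longrightarrow> real (card \<I>) \<le> C / \<sigma>\<^sup>2"
proof (intro exI[of _ 4] allI impI, elim conjE)
  fix \<sigma> :: real and \<I> :: "real set set" and p :: real
  assume "0 < \<sigma>" "\<sigma> \<le> 1" "finite \<I>" "\<forall>I\<in>\<I>. closed_interval I \<and> p \<in> I" "exposed \<sigma> \<I>"
  then have "real (card \<I>) \<le> 2 / \<sigma> + 2"
    by (intro card_exposed_intervals_through_point_le)
  also have "\<dots> \<le> 4 / \<sigma>\<^sup>2"
  proof -
    have "\<sigma>\<^sup>2 \<le> \<sigma>" "\<sigma>\<^sup>2 \<le> 1"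
      using \<open>0 < \<sigma>\<close> \<open>\<sigma> \<le> 1\<close> by (simp_all add: power2_eq_square mult_le_one)
    then have "1 / \<sigma> \<le> 1 / \<sigma>\<^sup>2" "1 \<le> 1 / \<sigma>\<^sup>2"
      using \<open>0 < \<sigma>\<close> by (simp_all add: frac_le)
    then show ?thesis by simp
  qed
  finally show "real (card \<I>) \<le> 4 / \<sigma>\<^sup>2" .
qed

end
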